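(* Let $m\ge 2$ and let $v_1,\dots,v_m$ be distinct values. Enforcing GAC on $\mathrm{Precedence}([v_1,\dots,v_m],[X_1,\dots,X_n])$ is strictly stronger than enforcing GAC on each of the constraints $\mathrm{Precedence}([v_i,v_j],[X_1,\dots,X_n])$ for $1\le i<j\le m$. That is: (i) for all finite domains of $X_1,\dots,X_n$, if $\mathrm{Precedence}([v_1,\dots,v_m],[X_1,\dots,X_n])$ is GAC then every $\mathrm{Precedence}([v_i,v_j],[X_1,\dots,X_n])$ with $1\le i<j\le m$ is GAC; and (ii) there exist $n$, $m$, values and domains for which every $\mathrm{Precedence}([v_i,v_j],[X_1,\dots,X_n])$ with $1\le i<j\le m$ is GAC but $\mathrm{Precedence}([v_1,\dots,v_m],[X_1,\dots,X_n])$ is not GAC.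
   Context: $X_1,\dots,X_n$ are finite domain variables, each with a finite domain $D(X_i)$. A support of a constraint is an assignment of a value from its domain to each variable that satisfies the constraint; a constraint is generalized arc consistent (GAC) iff every value in every variable's domain belongs to some support. For distinct values $a,b$, $\mathrm{Precedence}([a,b],[X_1,\dots,X_n])$ holds iff $\min\{i \mid X_i=a \text{ or } i=n+1\} < \min\{i \mid X_i=b \text{ or } i=n+2\}$ (i.e. if $b$ is taken by some $X_i$ then $a$ is taken by some $X_l$ with $l<i$). For distinct values $v_1,\dots,v_m$, $\mathrm{Precedence}([v_1,\dots,v_m],[X_1,\dots,X_n])$ holds iff $\mathrm{Precedence}([v_i,v_{i+1}],[X_1,\dots,X_n])$ holds for all $1\le i<m$ (equivalently, for all $1\le i<j\le m$). *)

theory Defs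
  imports Main
begin

text \<open>Variables X_1..X_n are indexed by 1..n; an assignment is a function
  s :: nat => 'a, with s i the value of X_i. Domains are D :: nat => 'a set.\<close>

definition valid_assignment :: "nat \<Rightarrow> (nat \<Rightarrow> 'a set) \<Rightarrow> (nat \<Rightarrow> 'a) \<Rightarrow> bool" where
  "valid_assignment n D s \<longleftrightarrow> (\<forall>i\<in>{1..n}. s i \<in> D i)"

definition precedence2 :: "nat \<Rightarrow> 'a \<Rightarrow> 'a \<Rightarrow> (nat \<Rightarrow> 'a) \<Rightarrow> bool" where
  "precedence2 n a b s \<longleftrightarrow>
     (LEAST i::nat. (1 \<le> i \<and> i \<le> n \<and> s i = a) \<or> i = n + 1)
   < (LEAST i::nat. (1 \<le> i \<and> i \<le> n \<and> s i = b) \<or> i = n + 2)"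

text \<open>Precedence([v_1..v_m],[X_1..X_n]): all consecutive pairs (list indices 0-based).\<close>
definition precedence :: "nat \<Rightarrow> 'a list \<Rightarrow> (nat \<Rightarrow> 'a) \<Rightarrow> bool" where
  "precedence n vs s \<longleftrightarrow> (\<forall>i. i + 1 < length vs \<longrightarrow> precedence2 n (vs ! i) (vs ! (i + 1)) s)"

definition GAC :: "nat \<Rightarrow> (nat \<Rightarrow> 'a set) \<Rightarrow> ((nat \<Rightarrow> 'a) \<Rightarrow> bool) \<Rightarrow> bool" where
  "GAC n D C \<longleftrightarrow> (\<forall>i\<in>{1..n}. \<forall>d\<in>D i. \<exists>s. valid_assignment n D s \<and> s i = d \<and> C s)"

end

theory Submission
  imports Defs
begin

(* Proof idea.
   (i) Precedence([a,b]) says: every occurrence of b is preceded by an occurrence of a.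
   In this form it is visibly transitive, so the chain constraint Precedence([v_1,...,v_m])
   implies every pairwise constraint Precedence([v_i,v_j]) with i < j.  GAC is monotone
   under weakening of the constraint (a support of the stronger constraint is a support of
   the weaker one), hence GAC of the chain gives GAC of every pair.
   (ii) Take n = 3, values [0,1,2] and domains D(X_1) = {0,3}, D(X_2) = {1,3},
   D(X_3) = {1,2}.  Each of the three pairwise constraints has two supports covering all
   domain values, but no support of the chain constraint assigns 3 to X_1: then X_2 and X_3
   cannot take 1, so X_3 = 2, which is not preceded by 1.
   The file first proves the characterisation of precedence2, its transitivity and the
   consequences for chains and GAC, then the concrete three-variable counterexample. *)

lemma precedence2_iff:
  "precedence2 n a b s \<longleftrightarrow> (\<forall>k\<in>{1..n}. s k = b \<longrightarrow> (\<exists>l\<in>{1..<k}. s l = a))"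
proof -
  define P where "P x i \<longleftrightarrow> 1 \<le> i \<and> i \<le> n \<and> s i = x" for x i
  define first_a where "first_a = (LEAST i::nat. P a i \<or> i = n + 1)"
  define first_b where "first_b = (LEAST i::nat. P b i \<or> i = n + 2)"
  have first_a_prop: "P a first_a \<or> first_a = n + 1"
    unfolding first_a_def by (rule LeastI[of _ "n + 1"]) simp
  have first_a_le: "first_a \<le> n + 1"
    unfolding first_a_def by (rule Least_le) simp
  have first_b_prop: "P b first_b \<or> first_b = n + 2"
    unfolding first_b_def by (rule LeastI[of _ "n + 2"]) simp
  have first_a_min: "first_a \<le> l" if "P a l" for l
    unfolding first_a_def by (rule Least_le) (simp add: that)
  have first_b_min: "first_b \<le> l" if "P b l" for l
    unfolding first_b_def by (rule Least_le) (simp add: that)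
  have unfold: "precedence2 n a b s \<longleftrightarrow> first_a < first_b"
    unfolding precedence2_def first_a_def first_b_def P_def by simp
  show ?thesis
  proof
    assume "precedence2 n a b s"
    then have lt: "first_a < first_b" using unfold by simp
    show "\<forall>k\<in>{1..n}. s k = b \<longrightarrow> (\<exists>l\<in>{1..<k}. s l = a)"
    proof (intro ballI impI)
      fix k assume k: "k \<in> {1..n}" "s k = b"
      then have "first_a < k" using lt first_b_min[of k] P_def by auto
      moreover from this have "P a first_a" using first_a_prop k by auto
      ultimately show "\<exists>l\<in>{1..<k}. s l = a" using P_def by auto
    qed
  next
    assume preceded: "\<forall>k\<in>{1..n}. s k = b \<longrightarrow> (\<exists>l\<in>{1..<k}. s l = a)"
    show "precedence2 n a b s"
    proof (cases "P b first_b")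
      case True
      then obtain l where l: "l \<in> {1..<first_b}" "s l = a" using preceded P_def by auto
      then have "first_a \<le> l" using first_a_min True P_def by auto
      then show ?thesis using unfold l by auto
    next
      case False
      then show ?thesis using unfold first_b_prop first_a_le by auto
    qed
  qed
qed

lemma precedence2_trans:
  assumes "precedence2 n a b s" and "precedence2 n b c s"
  shows "precedence2 n a c s"
  unfolding precedence2_iff
proof (intro ballI impI)
  fix k assume k: "k \<in> {1..n}" "s k = c"
  then obtain l where l: "l \<in> {1..<k}" "s l = b"
    using assms(2) unfolding precedence2_iff by blast
  with k obtain l' where "l' \<in> {1..<l}" "s l' = a"
    using assms(1) unfolding precedence2_iff by fastforce
  with l show "\<exists>l\<in>{1..<k}. s l = a" by auto
qed

lemma precedence_imp_precedence2:
  assumes chain: "precedence n vs s"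
  shows "j < length vs \<Longrightarrow> i < j \<Longrightarrow> precedence2 n (vs ! i) (vs ! j) s"
proof (induction j)
  case 0
  then show ?case by simp
next
  case (Suc j)
  have step: "precedence2 n (vs ! j) (vs ! Suc j) s"
    using chain Suc.prems(1) unfolding precedence_def by simp
  show ?case
  proof (cases "i = j")
    case True
    then show ?thesis using step by simp
  next
    case False
    then have "precedence2 n (vs ! i) (vs ! j) s" using Suc by simp
    then show ?thesis using step by (rule precedence2_trans)
  qed
qed

lemma GAC_mono:
  assumes "GAC n D C" and "\<And>s. C s \<Longrightarrow> C' s"
  shows "GAC n D C'"
  using assms unfolding GAC_def by blast

lemma GAC_by_supports:
  assumes "\<And>s. s \<in> S \<Longrightarrow> valid_assignment n D s \<and> C s"
    and "\<And>i d. i \<in> {1..n} \<Longrightarrow> d \<in> D i \<Longrightarrow> \<exists>s\<in>S. s i = d"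
  shows "GAC n D C"
  unfolding GAC_def using assms by metis

definition tuple3 :: "'b \<Rightarrow> 'b \<Rightarrow> 'b \<Rightarrow> nat \<Rightarrow> 'b" where
  "tuple3 x y z = (\<lambda>k. if k = 1 then x else if k = 2 then y else z)"

lemma tuple3_simps [simp]:
  "tuple3 x y z (Suc 0) = x" "tuple3 x y z 2 = y" "tuple3 x y z 3 = z"
  by (simp_all add: tuple3_def)

lemma upto_3: "{1..3::nat} = {1, 2, 3}"
  by auto

lemma precedence2_3:
  "precedence2 3 a b s \<longleftrightarrow>
     s 1 \<noteq> b \<and> (s 2 = b \<longrightarrow> s 1 = a) \<and> (s 3 = b \<longrightarrow> s 1 = a \<or> s 2 = a)"
proof -
  have "{1..<2::nat} = {1}" "{1..<3::nat} = {1, 2}" by auto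
  then show ?thesis unfolding precedence2_iff upto_3 by auto
qed

lemma valid_assignment_3:
  "valid_assignment 3 D s \<longleftrightarrow> s 1 \<in> D 1 \<and> s 2 \<in> D 2 \<and> s 3 \<in> D 3"
  unfolding valid_assignment_def upto_3 by simp

definition counter_domains :: "nat \<Rightarrow> nat set" where
  "counter_domains = tuple3 {0, 3} {1, 3} {1, 2}"

lemma counter_precedence2_GAC:
  assumes "(a, b) \<in> {(0, 1), (0, 2), (1, 2)}"
  shows "GAC 3 counter_domains (precedence2 3 a b)"
proof (rule GAC_by_supports)
  let ?S = "if (a, b) = (0, 1) then {tuple3 0 1 1, tuple3 3 3 2}
            else {tuple3 0 1 2, tuple3 3 3 1}"
  show "valid_assignment 3 counter_domains s \<and> precedence2 3 a b s" if "s \<in> ?S" for s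
    using assms that
    by (auto simp: valid_assignment_3 precedence2_3 counter_domains_def split: if_splits)
  show "\<exists>s\<in>?S. s i = d" if "i \<in> {1..3}" "d \<in> counter_domains i" for i d
  proof -
    from that(1) have "i = 1 \<or> i = 2 \<or> i = 3" by auto
    then show ?thesis using assms that(2) by (auto simp: counter_domains_def)
  qed
qed

text \<open>No support of the chain constraint gives X_1 the value 3.\<close>
lemma counter_precedence_not_GAC:
  "\<not> GAC 3 counter_domains (precedence 3 [0, 1, 2])"
proof
  assume "GAC 3 counter_domains (precedence 3 [0, 1, 2])"
  moreover have "(3::nat) \<in> counter_domains 1" by (simp add: counter_domains_def)
  ultimately obtain s where valid: "valid_assignment 3 counter_domains s"
    and "s 1 = 3" and chain: "precedence 3 [0, 1, 2] s"
    unfolding GAC_def by fastforce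
  have "precedence2 3 0 1 s" "precedence2 3 1 2 s"
    using chain unfolding precedence_def by (auto dest: spec[of _ 0] spec[of _ 1])
  with valid \<open>s 1 = 3\<close> show False
    by (auto simp: valid_assignment_3 precedence2_3 counter_domains_def)
qed

theorem theorem1:
  shows "(\<forall>(n::nat) (vs::'a list) (D::nat \<Rightarrow> 'a set).
            length vs \<ge> 2 \<and> distinct vs \<and> (\<forall>i\<in>{1..n}. finite (D i)) \<and>
            GAC n D (precedence n vs)
            \<longrightarrow> (\<forall>i j. i < j \<and> j < length vs \<longrightarrow> GAC n D (precedence2 n (vs ! i) (vs ! j))))
       \<and> (\<exists>(n::nat) (vs::nat list) (D::nat \<Rightarrow> nat set).
            length vs \<ge> 2 \<and> distinct vs \<and> (\<forall>i\<in>{1..n}. finite (D i)) \<and>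
            (\<forall>i j. i < j \<and> j < length vs \<longrightarrow> GAC n D (precedence2 n (vs ! i) (vs ! j))) \<and>
            \<not> GAC n D (precedence n vs))"
proof (intro conjI allI impI)
  fix n :: nat and vs :: "'a list" and D :: "nat \<Rightarrow> 'a set" and i j :: nat
  assume "length vs \<ge> 2 \<and> distinct vs \<and> (\<forall>i\<in>{1..n}. finite (D i)) \<and> GAC n D (precedence n vs)"
    and "i < j \<and> j < length vs"
  then show "GAC n D (precedence2 n (vs ! i) (vs ! j))"
    using GAC_mono precedence_imp_precedence2 by metis
next
  have pairs: "GAC 3 counter_domains (precedence2 3 ([0, 1, 2] ! i) ([0, 1, 2] ! j))"
    if "i < j" "j < length [0, 1, 2::nat]" for i j
  proof -
    from that have "(i, j) \<in> {(0, 1), (0, 2), (1, 2)}" by auto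
    then show ?thesis using counter_precedence2_GAC by auto
  qed
  have "\<forall>i\<in>{1..3}. finite (counter_domains i)"
    unfolding upto_3 by (simp add: counter_domains_def)
  then show "\<exists>(n::nat) (vs::nat list) (D::nat \<Rightarrow> nat set).
            length vs \<ge> 2 \<and> distinct vs \<and> (\<forall>i\<in>{1..n}. finite (D i)) \<and>
            (\<forall>i j. i < j \<and> j < length vs \<longrightarrow> GAC n D (precedence2 n (vs ! i) (vs ! j))) \<and>
            \<not> GAC n D (precedence n vs)"
    using pairs counter_precedence_not_GAC
    by (intro exI[of _ 3] exI[of _ "[0, 1, 2]"] exI[of _ counter_domains]) simp
qed

end
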